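(* (a) Let $\langle A,\le\rangle$ be a poset with a partition pair $\langle\otimes,\odot\rangle$. Let $I\subseteq A$ be a set of representatives of the classes of $\equiv_\odot$ (equivalently $\equiv_\otimes$), made into a join-semilattice by letting $p\vee q$ be the representative of the class of $p\odot q$, let $A_p$ be the class of $p$ with the restricted order $\le_p$, and for $p\preceq_\odot q$ in $I$ define $\psi_{pq}(a):=a\otimes q$, $\varphi_{pq}(a):=a\odot q$ ($a\in A_p$). Then these maps are well-defined monotone maps $A_p\to A_q$ forming a directed system (identities at $p=q$, closed under composition) which satisfies conditions (S1) and (S2) below, and for $a\in A_p$, $b\in A_q$, $s=p\vee q$: $a\le b$ iff $\varphi_{ps}(a)\le_s\psi_{qs}(b)$. (b) Conversely, let $\mathbf I$ be a join-semilattice, $\langle A_p,\le_p\rangle$ ($p\in I$) pairwise disjoint posets and $\psi_{pq},\varphi_{pq}:A_p\to A_q$ ($p\preceq q$) monotone maps with $\varphi_{pp}=\psi_{pp}=\mathrm{id}$, $\varphi_{qr}\varphi_{pq}=\varphi_{pr}$, $\psi_{qr}\psi_{pq}=\psi_{pr}$, satisfying (S1) and (S2); let $\le$ on $A=\biguplus A_p$ be defined by $a\le b$ iff $\varphi_{ps}(a)\le_s\psi_{qs}(b)$ ($a\in A_p$, $b\in A_q$, $s=p\vee q$). Then $a\otimes b:=\psi_{ps}(a)$ and $a\odot b:=\varphi_{ps}(a)$ define a partition pair on $\langle A,\le\rangle$ whose induced maps as in (a) are the given $\psi_{pq},\varphi_{pq}$. Here (S1): if $p\prec q$, $p\prec r$,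 $t=q\vee r$, then $\varphi_{qt}(\psi_{pq}(a))\le_t\psi_{rt}(\varphi_{pr}(a))$ for all $a\in A_p$; (S2): if $p\prec q$, $a,b\in A_p$ and $\varphi_{pq}(a)\le_q\psi_{pq}(b)$, then $a<_pb$.
   Context: A left normal band on a set $A$ is a binary operation $\odot$ with $a\odot a=a$, $a\odot(b\odot c)=(a\odot b)\odot c$, $a\odot(b\odot c)=a\odot(c\odot b)$ for all $a,b,c$. Put $a\preceq_\odot b\iff b\odot a=b$, and $a\equiv_\odot b$ iff $a\preceq_\odot b$ and $b\preceq_\odot a$; the quotient by $\equiv_\odot$ is a join-semilattice under the induced operation. Two left normal bands are homotactic if they induce the same preorder $\preceq$. A partition pair for a poset $\langle A,\le\rangle$ is a pair $\langle\otimes,\odot\rangle$ of homotactic left normal bands on $A$ such that (PS1) if $a\le b$ then $a\otimes c\le b\otimes c$ and $a\odot c\le b\odot c$ for all $c$; (PS2) if $a\odot b\le b\otimes a$ then $a\le b$. *)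

theory Defs
  imports Main
begin

definition lnband :: "'a set \<Rightarrow> ('a \<Rightarrow> 'a \<Rightarrow> 'a) \<Rightarrow> bool" where
  "lnband A f \<longleftrightarrow>
     (\<forall>a\<in>A. \<forall>b\<in>A. f a b \<in> A) \<and>
     (\<forall>a\<in>A. f a a = a) \<and>
     (\<forall>a\<in>A. \<forall>b\<in>A. \<forall>c\<in>A. f a (f b c) = f (f a b) c) \<and>
     (\<forall>a\<in>A. \<forall>b\<in>A. \<forall>c\<in>A. f a (f b c) = f a (f c b))"

definition bpre :: "('a \<Rightarrow> 'a \<Rightarrow> 'a) \<Rightarrow> 'a \<Rightarrow> 'a \<Rightarrow> bool" where
  "bpre f a b \<longleftrightarrow> f b a = b"

definition bequiv :: "('a \<Rightarrow> 'a \<Rightarrow> 'a) \<Rightarrow> 'a \<Rightarrow> 'a \<Rightarrow> bool" where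
  "bequiv f a b \<longleftrightarrow> bpre f a b \<and> bpre f b a"

definition homotactic :: "'a set \<Rightarrow> ('a \<Rightarrow> 'a \<Rightarrow> 'a) \<Rightarrow> ('a \<Rightarrow> 'a \<Rightarrow> 'a) \<Rightarrow> bool" where
  "homotactic A f g \<longleftrightarrow> (\<forall>a\<in>A. \<forall>b\<in>A. bpre f a b \<longleftrightarrow> bpre g a b)"

definition poset_on :: "'a set \<Rightarrow> ('a \<Rightarrow> 'a \<Rightarrow> bool) \<Rightarrow> bool" where
  "poset_on A le \<longleftrightarrow>
     (\<forall>a\<in>A. le a a) \<and>
     (\<forall>a\<in>A. \<forall>b\<in>A. le a b \<and> le b a \<longrightarrow> a = b) \<and>
     (\<forall>a\<in>A. \<forall>b\<in>A. \<forall>c\<in>A. le a b \<and> le b c \<longrightarrow> le a c)"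

text \<open>Partition pair (ot = \<otimes>, od = \<odot>) for the order le on A.\<close>
definition partition_pair ::
  "'a set \<Rightarrow> ('a \<Rightarrow> 'a \<Rightarrow> bool) \<Rightarrow> ('a \<Rightarrow> 'a \<Rightarrow> 'a) \<Rightarrow> ('a \<Rightarrow> 'a \<Rightarrow> 'a) \<Rightarrow> bool" where
  "partition_pair A le ot od \<longleftrightarrow>
     lnband A ot \<and> lnband A od \<and> homotactic A ot od \<and>
     (\<forall>a\<in>A. \<forall>b\<in>A. \<forall>c\<in>A. le a b \<longrightarrow> le (ot a c) (ot b c) \<and> le (od a c) (od b c)) \<and>
     (\<forall>a\<in>A. \<forall>b\<in>A. le (od a b) (ot b a) \<longrightarrow> le a b)"

definition join_semilattice :: "'i set \<Rightarrow> ('i \<Rightarrow> 'i \<Rightarrow> 'i) \<Rightarrow> bool" where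
  "join_semilattice I jn \<longleftrightarrow>
     (\<forall>p\<in>I. \<forall>q\<in>I. jn p q \<in> I) \<and>
     (\<forall>p\<in>I. jn p p = p) \<and>
     (\<forall>p\<in>I. \<forall>q\<in>I. jn p q = jn q p) \<and>
     (\<forall>p\<in>I. \<forall>q\<in>I. \<forall>r\<in>I. jn p (jn q r) = jn (jn p q) r)"

definition jle :: "('i \<Rightarrow> 'i \<Rightarrow> 'i) \<Rightarrow> 'i \<Rightarrow> 'i \<Rightarrow> bool" where
  "jle jn p q \<longleftrightarrow> jn p q = q"

definition jlt :: "('i \<Rightarrow> 'i \<Rightarrow> 'i) \<Rightarrow> 'i \<Rightarrow> 'i \<Rightarrow> bool" where
  "jlt jn p q \<longleftrightarrow> jle jn p q \<and> p \<noteq> q"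

definition dir_system ::
  "'i set \<Rightarrow> ('i \<Rightarrow> 'i \<Rightarrow> 'i) \<Rightarrow> ('i \<Rightarrow> 'a set) \<Rightarrow> ('i \<Rightarrow> 'a \<Rightarrow> 'a \<Rightarrow> bool)
    \<Rightarrow> ('i \<Rightarrow> 'i \<Rightarrow> 'a \<Rightarrow> 'a) \<Rightarrow> ('i \<Rightarrow> 'i \<Rightarrow> 'a \<Rightarrow> 'a) \<Rightarrow> bool" where
  "dir_system I jn Ap leP psi phi \<longleftrightarrow>
     join_semilattice I jn \<and>
     (\<forall>p\<in>I. poset_on (Ap p) (leP p)) \<and>
     (\<forall>p\<in>I. \<forall>q\<in>I. p \<noteq> q \<longrightarrow> Ap p \<inter> Ap q = {}) \<and>
     (\<forall>p\<in>I. \<forall>q\<in>I. jle jn p q \<longrightarrow>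
        (\<forall>a\<in>Ap p. psi p q a \<in> Ap q \<and> phi p q a \<in> Ap q) \<and>
        (\<forall>a\<in>Ap p. \<forall>b\<in>Ap p. leP p a b \<longrightarrow>
            leP q (psi p q a) (psi p q b) \<and> leP q (phi p q a) (phi p q b))) \<and>
     (\<forall>p\<in>I. \<forall>a\<in>Ap p. psi p p a = a \<and> phi p p a = a) \<and>
     (\<forall>p\<in>I. \<forall>q\<in>I. \<forall>r\<in>I. jle jn p q \<and> jle jn q r \<longrightarrow>
        (\<forall>a\<in>Ap p. psi q r (psi p q a) = psi p r a \<and> phi q r (phi p q a) = phi p r a))"

definition cond_S1 ::
  "'i set \<Rightarrow> ('i \<Rightarrow> 'i \<Rightarrow> 'i) \<Rightarrow> ('i \<Rightarrow> 'a set) \<Rightarrow> ('i \<Rightarrow> 'a \<Rightarrow> 'a \<Rightarrow> bool)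
    \<Rightarrow> ('i \<Rightarrow> 'i \<Rightarrow> 'a \<Rightarrow> 'a) \<Rightarrow> ('i \<Rightarrow> 'i \<Rightarrow> 'a \<Rightarrow> 'a) \<Rightarrow> bool" where
  "cond_S1 I jn Ap leP psi phi \<longleftrightarrow>
     (\<forall>p\<in>I. \<forall>q\<in>I. \<forall>r\<in>I. jlt jn p q \<and> jlt jn p r \<longrightarrow>
        (\<forall>a\<in>Ap p. leP (jn q r) (phi q (jn q r) (psi p q a)) (psi r (jn q r) (phi p r a))))"

definition cond_S2 ::
  "'i set \<Rightarrow> ('i \<Rightarrow> 'i \<Rightarrow> 'i) \<Rightarrow> ('i \<Rightarrow> 'a set) \<Rightarrow> ('i \<Rightarrow> 'a \<Rightarrow> 'a \<Rightarrow> bool)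
    \<Rightarrow> ('i \<Rightarrow> 'i \<Rightarrow> 'a \<Rightarrow> 'a) \<Rightarrow> ('i \<Rightarrow> 'i \<Rightarrow> 'a \<Rightarrow> 'a) \<Rightarrow> bool" where
  "cond_S2 I jn Ap leP psi phi \<longleftrightarrow>
     (\<forall>p\<in>I. \<forall>q\<in>I. jlt jn p q \<longrightarrow>
        (\<forall>a\<in>Ap p. \<forall>b\<in>Ap p. leP q (phi p q a) (psi p q b) \<longrightarrow> leP p a b \<and> a \<noteq> b))"

end

theory Submission
  imports Defs
begin

(* Homotactic left normal bands induce the same preorder, whose classes are the blocks A_p.
  From (PS1) and (PS2) every element sits between its two translates, a \<otimes> b \<le> a \<le> a \<odot> b, and
  a \<le> b iff a \<odot> b \<le> b \<otimes> a. By left normality a \<odot> b and b \<otimes> a only depend on the classes of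
  b and a, so the order is decided in the block of the join, which gives (a); (S1) and (S2) are
  then instances of this criterion. Conversely, in the glued order (S1) lets a chain a \<le> b \<le> c
  be transported through the block of b, and (S2) lets a comparison made in the block of an
  upper bound of p \<vee> q descend to the block of p \<vee> q itself; this yields transitivity,
  antisymmetry and (PS1), while \<otimes> and \<odot> are left normal bands because \<psi> and \<phi> compose. *)

section \<open>Left normal bands\<close>

locale left_normal_band =
  fixes A :: "'a set" and f :: "'a \<Rightarrow> 'a \<Rightarrow> 'a"
  assumes lnband: "lnband A f"
begin

lemma closed: "a \<in> A \<Longrightarrow> b \<in> A \<Longrightarrow> f a b \<in> A"
  and idem: "a \<in> A \<Longrightarrow> f a a = a"
  and assoc: "a \<in> A \<Longrightarrow> b \<in> A \<Longrightarrow> c \<in> A \<Longrightarrow> f a (f b c) = f (f a b) c"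
  and left_normal: "a \<in> A \<Longrightarrow> b \<in> A \<Longrightarrow> c \<in> A \<Longrightarrow> f a (f b c) = f a (f c b)"
  using lnband unfolding lnband_def by blast+

lemma right_commute: "a \<in> A \<Longrightarrow> b \<in> A \<Longrightarrow> c \<in> A \<Longrightarrow> f (f a b) c = f (f a c) b"
  by (simp add: assoc [symmetric] left_normal)

lemma bpre_refl: "a \<in> A \<Longrightarrow> bpre f a a"
  by (simp add: bpre_def idem)

lemma bpre_trans:
  assumes "a \<in> A" "b \<in> A" "c \<in> A" and "bpre f a b" "bpre f b c"
  shows "bpre f a c"
proof -
  have "f c a = f (f c b) a" using \<open>bpre f b c\<close> by (simp add: bpre_def)
  also have "\<dots> = f c (f b a)" using assms by (simp add: assoc)
  also have "\<dots> = c" using \<open>bpre f a b\<close> \<open>bpre f b c\<close> by (simp add: bpre_def)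
  finally show ?thesis by (simp add: bpre_def)
qed

lemma bpre_mult_left:
  assumes "a \<in> A" "b \<in> A"
  shows "bpre f a (f a b)"
proof -
  have "f (f a b) a = f a (f a b)" using assms by (simp add: assoc [symmetric] left_normal)
  also have "\<dots> = f a b" using assms by (simp add: assoc idem)
  finally show ?thesis by (simp add: bpre_def)
qed

lemma bpre_mult_right: "a \<in> A \<Longrightarrow> b \<in> A \<Longrightarrow> bpre f b (f a b)"
  unfolding bpre_def by (simp add: assoc [symmetric] idem)

lemma bpre_mult_iff:
  assumes "a \<in> A" "b \<in> A" "c \<in> A"
  shows "bpre f (f a b) c \<longleftrightarrow> bpre f a c \<and> bpre f b c"
proof
  assume "bpre f (f a b) c"
  moreover have "bpre f a (f a b)" "bpre f b (f a b)"
    using assms by (simp_all add: bpre_mult_left bpre_mult_right)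
  ultimately show "bpre f a c \<and> bpre f b c"
    using assms closed by (meson bpre_trans)
next
  assume "bpre f a c \<and> bpre f b c"
  then show "bpre f (f a b) c"
    using assms unfolding bpre_def by (simp add: assoc)
qed

lemma bequiv_iff_same_upper_bounds:
  assumes "a \<in> A" "b \<in> A"
  shows "bequiv f a b \<longleftrightarrow> (\<forall>c\<in>A. bpre f a c \<longleftrightarrow> bpre f b c)"
proof
  show "bequiv f a b \<Longrightarrow> \<forall>c\<in>A. bpre f a c \<longleftrightarrow> bpre f b c"
    using assms unfolding bequiv_def by (meson bpre_trans)
  show "\<forall>c\<in>A. bpre f a c \<longleftrightarrow> bpre f b c \<Longrightarrow> bequiv f a b"
    using assms bpre_refl unfolding bequiv_def by blast
qed

lemma mult_absorb: "bpre f b a \<Longrightarrow> f a b = a"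
  by (simp add: bpre_def)

lemma mult_mult_absorb: "a \<in> A \<Longrightarrow> b \<in> A \<Longrightarrow> c \<in> A \<Longrightarrow> bpre f b a \<Longrightarrow> f a (f b c) = f a c"
  by (simp add: assoc bpre_def)

lemma mult_cong_bequiv:
  assumes "a \<in> A" "b \<in> A" "c \<in> A" and "bequiv f b c"
  shows "f a b = f a c"
proof -
  have bc: "f b c = b" "f c b = c" using \<open>bequiv f b c\<close> by (auto simp: bequiv_def bpre_def)
  have "f a b = f a (f b c)" by (simp only: bc)
  also have "\<dots> = f a (f c b)" using assms by (simp add: left_normal)
  also have "\<dots> = f a c" by (simp only: bc)
  finally show ?thesis .
qed

lemma mult_bequiv_of_bpre:
  assumes "a \<in> A" "b \<in> A" "bpre f a b"
  shows "bequiv f (f a b) b"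
proof -
  have "bpre f (f a b) b" using assms bpre_refl by (simp add: bpre_mult_iff)
  then show ?thesis using assms bpre_mult_right by (simp add: bequiv_def)
qed

end

section \<open>Partition pairs\<close>

locale partition_pair_poset =
  fixes A :: "'a set" and le :: "'a \<Rightarrow> 'a \<Rightarrow> bool" and ot od :: "'a \<Rightarrow> 'a \<Rightarrow> 'a"
  assumes poset: "poset_on A le" and partition_pair: "partition_pair A le ot od"
begin

sublocale ot: left_normal_band A ot
  using partition_pair by unfold_locales (simp add: partition_pair_def)

sublocale od: left_normal_band A od
  using partition_pair by unfold_locales (simp add: partition_pair_def)

lemma le_refl: "a \<in> A \<Longrightarrow> le a a"
  and le_antisym: "a \<in> A \<Longrightarrow> b \<in> A \<Longrightarrow> le a b \<Longrightarrow> le b a \<Longrightarrow> a = b"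
  and le_trans: "a \<in> A \<Longrightarrow> b \<in> A \<Longrightarrow> c \<in> A \<Longrightarrow> le a b \<Longrightarrow> le b c \<Longrightarrow> le a c"
  using poset unfolding poset_on_def by blast+

lemma ot_mono: "a \<in> A \<Longrightarrow> b \<in> A \<Longrightarrow> c \<in> A \<Longrightarrow> le a b \<Longrightarrow> le (ot a c) (ot b c)"
  and od_mono: "a \<in> A \<Longrightarrow> b \<in> A \<Longrightarrow> c \<in> A \<Longrightarrow> le a b \<Longrightarrow> le (od a c) (od b c)"
  and le_of_od_le_ot: "a \<in> A \<Longrightarrow> b \<in> A \<Longrightarrow> le (od a b) (ot b a) \<Longrightarrow> le a b"
  using partition_pair unfolding partition_pair_def by blast+

lemma bpre_ot_iff: "a \<in> A \<Longrightarrow> b \<in> A \<Longrightarrow> bpre ot a b \<longleftrightarrow> bpre od a b"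
  using partition_pair unfolding partition_pair_def homotactic_def by blast

lemma bequiv_ot_iff: "a \<in> A \<Longrightarrow> b \<in> A \<Longrightarrow> bequiv ot a b \<longleftrightarrow> bequiv od a b"
  by (simp add: bequiv_def bpre_ot_iff)

lemma ot_le:
  assumes "a \<in> A" "b \<in> A"
  shows "le (ot a b) a"
proof (rule le_of_od_le_ot)
  have "bpre od a (ot a b)"
    using assms ot.bpre_mult_left ot.closed by (simp add: bpre_ot_iff [symmetric])
  then have "od (ot a b) a = ot a b" by (rule od.mult_absorb)
  moreover have "ot a (ot a b) = ot a b"
    using assms by (simp add: ot.assoc ot.idem)
  ultimately show "le (od (ot a b) a) (ot a (ot a b))"
    using assms ot.closed le_refl by simp
qed (use assms ot.closed in auto)

lemma le_od:
  assumes "a \<in> A" "b \<in> A"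
  shows "le a (od a b)"
proof (rule le_of_od_le_ot)
  have "bpre ot a (od a b)"
    using assms od.bpre_mult_left od.closed by (simp add: bpre_ot_iff)
  then have "ot (od a b) a = od a b" by (rule ot.mult_absorb)
  moreover have "od a (od a b) = od a b"
    using assms by (simp add: od.assoc od.idem)
  ultimately show "le (od a (od a b)) (ot (od a b) a)"
    using assms od.closed le_refl by simp
qed (use assms od.closed in auto)

lemma le_iff_od_le_ot:
  assumes "a \<in> A" "b \<in> A"
  shows "le a b \<longleftrightarrow> le (od a b) (ot b a)"
proof
  assume "le a b"
  then have "le (od a b) (od (ot b a) b)"
    using assms ot_mono [of a b a] ot.idem ot.closed od_mono by simp
  moreover have "od (ot b a) b = ot b a"
    using assms ot.bpre_mult_left ot.closed by (simp add: od.mult_absorb bpre_ot_iff [symmetric])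
  ultimately show "le (od a b) (ot b a)" by simp
qed (use assms le_of_od_le_ot in blast)

end

section \<open>The directed system of blocks of a partition pair\<close>

locale partition_pair_classes = partition_pair_poset +
  fixes I :: "'a set" and jn :: "'a \<Rightarrow> 'a \<Rightarrow> 'a"
  assumes reps_subset: "I \<subseteq> A"
    and unique_rep: "\<forall>a\<in>A. \<exists>!p. p \<in> I \<and> bequiv od a p"
    and join_rep: "\<forall>p\<in>I. \<forall>q\<in>I. jn p q \<in> I \<and> bequiv od (od p q) (jn p q)"
begin

abbreviation block :: "'a \<Rightarrow> 'a set" where
  "block \<equiv> \<lambda>p. {a \<in> A. bequiv od a p}"

lemma rep_in_carrier: "p \<in> I \<Longrightarrow> p \<in> A"
  using reps_subset by blast

lemma rep_unique:
  assumes "a \<in> A" "p \<in> I" "q \<in> I" "bequiv od a p" "bequiv od a q"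
  shows "p = q"
  using unique_rep [rule_format, OF \<open>a \<in> A\<close>] assms(2-) by auto

lemma join_closed: "p \<in> I \<Longrightarrow> q \<in> I \<Longrightarrow> jn p q \<in> I"
  and join_bequiv: "p \<in> I \<Longrightarrow> q \<in> I \<Longrightarrow> bequiv od (jn p q) (od p q)"
  using join_rep by (simp_all add: bequiv_def)

lemma reps_eq_if_same_upper_bounds:
  assumes "p \<in> I" "q \<in> I" "\<forall>c\<in>A. bpre od p c \<longleftrightarrow> bpre od q c"
  shows "p = q"
proof -
  have "bequiv od p p" "bequiv od p q"
    using assms rep_in_carrier od.bequiv_iff_same_upper_bounds by simp_all
  then show ?thesis
    using assms rep_in_carrier rep_unique by blast
qed

lemma bpre_join_iff:
  assumes "p \<in> I" "q \<in> I" "c \<in> A"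
  shows "bpre od (jn p q) c \<longleftrightarrow> bpre od p c \<and> bpre od q c"
  using assms join_bequiv join_closed rep_in_carrier od.closed
  by (simp add: od.bequiv_iff_same_upper_bounds od.bpre_mult_iff)

lemma jle_iff_bpre:
  assumes "p \<in> I" "q \<in> I"
  shows "jle jn p q \<longleftrightarrow> bpre od p q"
proof
  assume "jle jn p q"
  then show "bpre od p q"
    using bpre_join_iff [of p q q] assms rep_in_carrier od.bpre_refl by (simp add: jle_def)
next
  assume "bpre od p q"
  then have "\<forall>c\<in>A. bpre od (jn p q) c \<longleftrightarrow> bpre od q c"
    using assms rep_in_carrier bpre_join_iff by (meson od.bpre_trans)
  then show "jle jn p q"
    using assms join_closed reps_eq_if_same_upper_bounds by (simp add: jle_def)
qed

lemma join_semilattice: "join_semilattice I jn"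
  unfolding join_semilattice_def
proof (intro conjI ballI)
  fix p q r assume I: "p \<in> I" "q \<in> I" "r \<in> I"
  show "jn p q \<in> I" using I join_closed by simp
  show "jn p p = p"
    using I by (intro reps_eq_if_same_upper_bounds) (simp_all add: join_closed bpre_join_iff)
  show "jn p q = jn q p"
    using I by (intro reps_eq_if_same_upper_bounds) (auto simp add: join_closed bpre_join_iff)
  show "jn p (jn q r) = jn (jn p q) r"
    using I by (intro reps_eq_if_same_upper_bounds) (auto simp add: join_closed bpre_join_iff)
qed

lemma join_bequiv_ot:
  assumes "p \<in> I" "q \<in> I"
  shows "bequiv od (jn p q) (ot q p)"
proof -
  have A: "p \<in> A" "q \<in> A" "jn p q \<in> A" "ot q p \<in> A"
    using assms rep_in_carrier join_closed ot.closed by auto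
  have "bpre od (ot q p) c \<longleftrightarrow> bpre od (jn p q) c" if "c \<in> A" for c
  proof -
    have "bpre od (ot q p) c \<longleftrightarrow> bpre ot (ot q p) c" using A that by (simp add: bpre_ot_iff)
    also have "\<dots> \<longleftrightarrow> bpre ot q c \<and> bpre ot p c" using A that by (simp add: ot.bpre_mult_iff)
    also have "\<dots> \<longleftrightarrow> bpre od q c \<and> bpre od p c" using A that by (simp add: bpre_ot_iff)
    finally show ?thesis using assms that by (auto simp: bpre_join_iff)
  qed
  then show ?thesis using A by (simp add: od.bequiv_iff_same_upper_bounds)
qed

lemma le_iff_at_join:
  assumes I: "p \<in> I" "q \<in> I" and a: "a \<in> block p" and b: "b \<in> block q"
  shows "le a b \<longleftrightarrow> le (od a (jn p q)) (ot b (jn p q))"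
proof -
  have A: "a \<in> A" "b \<in> A" "p \<in> A" "q \<in> A" "jn p q \<in> A"
    using I a b rep_in_carrier join_closed by auto
  have pa: "bequiv od p a" and qb: "bequiv od q b"
    using a b by (auto simp: bequiv_def)
  have "od a (jn p q) = od a (od p q)"
    using A I join_bequiv od.closed by (intro od.mult_cong_bequiv) simp_all
  also have "\<dots> = od a q"
    using A pa by (intro od.mult_mult_absorb) (simp_all add: bequiv_def)
  also have "\<dots> = od a b"
    using A qb by (intro od.mult_cong_bequiv)
  finally have od_join: "od a (jn p q) = od a b" .
  have "ot b (jn p q) = ot b (ot q p)"
    using A I join_bequiv_ot ot.closed by (intro ot.mult_cong_bequiv) (simp_all add: bequiv_ot_iff)
  also have "\<dots> = ot b p"
    using A qb by (intro ot.mult_mult_absorb) (simp_all add: bequiv_def bpre_ot_iff)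
  also have "\<dots> = ot b a"
    using A pa by (intro ot.mult_cong_bequiv) (simp_all add: bequiv_ot_iff)
  finally have ot_join: "ot b (jn p q) = ot b a" .
  show ?thesis
    using A le_iff_od_le_ot od_join ot_join by simp
qed

lemma mult_in_block:
  assumes "p \<in> I" "q \<in> I" "bpre od p q" "a \<in> block p"
  shows "ot a q \<in> block q" and "od a q \<in> block q"
proof -
  have A: "a \<in> A" "p \<in> A" "q \<in> A"
    using assms rep_in_carrier by auto
  have "bpre od a p"
    using assms by (simp add: bequiv_def)
  with A assms(3) have "bpre od a q"
    by (meson od.bpre_trans)
  then show "ot a q \<in> block q" "od a q \<in> block q"
    using A ot.mult_bequiv_of_bpre od.mult_bequiv_of_bpre ot.closed od.closed
    by (simp_all add: bpre_ot_iff bequiv_ot_iff [symmetric])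
qed

lemma dir_system: "dir_system I jn block (\<lambda>p. le) (\<lambda>p q a. ot a q) (\<lambda>p q a. od a q)"
  unfolding dir_system_def
proof (intro conjI ballI impI)
  show "join_semilattice I jn" by (rule join_semilattice)
next
  fix p assume "p \<in> I"
  show "poset_on (block p) le" using poset unfolding poset_on_def by blast
next
  fix p q assume "p \<in> I" "q \<in> I" "p \<noteq> q"
  show "block p \<inter> block q = {}"
  proof (rule ccontr)
    assume "block p \<inter> block q \<noteq> {}"
    then obtain a where "a \<in> block p" "a \<in> block q" by blast
    with \<open>p \<in> I\<close> \<open>q \<in> I\<close> have "p = q" using rep_unique by auto
    with \<open>p \<noteq> q\<close> show False ..
  qed
next
  fix p q a assume "p \<in> I" "q \<in> I" "jle jn p q" "a \<in> block p"
  then show "ot a q \<in> block q" "od a q \<in> block q"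
    using mult_in_block jle_iff_bpre by simp_all
next
  fix p q a b assume "p \<in> I" "q \<in> I" "a \<in> block p" "b \<in> block p" "le a b"
  then show "le (ot a q) (ot b q)" "le (od a q) (od b q)"
    using rep_in_carrier ot_mono od_mono by simp_all
next
  fix p a assume "p \<in> I" "a \<in> block p"
  then have "bpre od p a" "bpre ot p a"
    using rep_in_carrier by (simp_all add: bequiv_def bpre_ot_iff)
  then show "ot a p = a" "od a p = a"
    by (simp_all add: ot.mult_absorb od.mult_absorb)
next
  fix p q r a assume "p \<in> I" "q \<in> I" "r \<in> I" "jle jn p q \<and> jle jn q r" "a \<in> block p"
  then have A: "a \<in> A" "q \<in> A" "r \<in> A" and "bpre od q r" "bpre ot q r"
    using rep_in_carrier jle_iff_bpre by (simp_all add: bpre_ot_iff)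
  have "ot (ot a q) r = ot (ot a r) q" using A by (rule ot.right_commute)
  also have "\<dots> = ot a r" using A \<open>bpre ot q r\<close> by (simp add: ot.assoc [symmetric] ot.mult_absorb)
  finally show "ot (ot a q) r = ot a r" .
  have "od (od a q) r = od (od a r) q" using A by (rule od.right_commute)
  also have "\<dots> = od a r" using A \<open>bpre od q r\<close> by (simp add: od.assoc [symmetric] od.mult_absorb)
  finally show "od (od a q) r = od a r" .
qed

lemma cond_S1: "cond_S1 I jn block (\<lambda>p. le) (\<lambda>p q a. ot a q) (\<lambda>p q a. od a q)"
  unfolding cond_S1_def
proof (intro ballI impI)
  fix p q r a assume I: "p \<in> I" "q \<in> I" "r \<in> I" and "jlt jn p q \<and> jlt jn p r" and a: "a \<in> block p"
  then have "bpre od p q" "bpre od p r"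
    by (simp_all add: jlt_def jle_iff_bpre)
  then have x: "ot a q \<in> block q" and y: "od a r \<in> block r"
    using I a mult_in_block by simp_all
  have "a \<in> A" "q \<in> A" "r \<in> A"
    using I a rep_in_carrier by auto
  then have "le (ot a q) (od a r)"
    using ot_le le_od ot.closed od.closed le_trans [of "ot a q" a "od a r"] by simp
  then show "le (od (ot a q) (jn q r)) (ot (od a r) (jn q r))"
    using le_iff_at_join [OF I(2,3) x y] by simp
qed

lemma cond_S2: "cond_S2 I jn block (\<lambda>p. le) (\<lambda>p q a. ot a q) (\<lambda>p q a. od a q)"
  unfolding cond_S2_def
proof (intro ballI impI)
  fix p q a b
  assume I: "p \<in> I" "q \<in> I" and "jlt jn p q" and a: "a \<in> block p" and b: "b \<in> block p"
    and le_at_q: "le (od a q) (ot b q)"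
  have A: "a \<in> A" "b \<in> A" "p \<in> A" "q \<in> A"
    using I a b rep_in_carrier by auto
  have "bpre od p q" "\<not> bpre od q p"
    using \<open>jlt jn p q\<close> I join_semilattice
    by (auto simp: jlt_def jle_def jle_iff_bpre [symmetric] join_semilattice_def)
  show "le a b \<and> a \<noteq> b"
  proof
    have "le a (od a q)" "le (ot b q) b"
      using A le_od ot_le by simp_all
    with A le_at_q show "le a b"
      using od.closed ot.closed le_trans [of a "od a q" "ot b q"] le_trans [of a "ot b q" b] by simp
    show "a \<noteq> b"
    proof
      assume "a = b"
      have "le (od a q) a"
        using A le_at_q ot_le [of a q] od.closed ot.closed \<open>a = b\<close>
          le_trans [of "od a q" "ot a q" a] by simp
      then have "od a q = a"
        using A \<open>le a (od a q)\<close> od.closed le_antisym by blast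
      then have "bpre od q a" by (simp add: bpre_def)
      moreover have "bpre od a p" using a by (simp add: bequiv_def)
      ultimately show False
        using A \<open>\<not> bpre od q p\<close> od.bpre_trans [of q a p] by simp
    qed
  qed
qed

lemma decomposition:
  "(\<forall>p\<in>I. \<forall>q\<in>I. jle jn p q \<longleftrightarrow> bpre od p q) \<and>
   dir_system I jn block (\<lambda>p. le) (\<lambda>p q a. ot a q) (\<lambda>p q a. od a q) \<and>
   cond_S1 I jn block (\<lambda>p. le) (\<lambda>p q a. ot a q) (\<lambda>p q a. od a q) \<and>
   cond_S2 I jn block (\<lambda>p. le) (\<lambda>p q a. ot a q) (\<lambda>p q a. od a q) \<and>
   (\<forall>p\<in>I. \<forall>q\<in>I. \<forall>a. \<forall>b. a \<in> A \<and> bequiv od a p \<and> b \<in> A \<and> bequiv od b q \<longrightarrow>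
      (le a b \<longleftrightarrow> le (od a (jn p q)) (ot b (jn p q))))"
  using jle_iff_bpre dir_system cond_S1 cond_S2 le_iff_at_join by simp

end

section \<open>Gluing a directed system into a partition pair\<close>

locale join_semilattice_on =
  fixes I :: "'i set" and jn :: "'i \<Rightarrow> 'i \<Rightarrow> 'i"
  assumes join_semilattice: "join_semilattice I jn"
begin

lemma join_closed: "p \<in> I \<Longrightarrow> q \<in> I \<Longrightarrow> jn p q \<in> I"
  and join_idem: "p \<in> I \<Longrightarrow> jn p p = p"
  and join_commute: "p \<in> I \<Longrightarrow> q \<in> I \<Longrightarrow> jn p q = jn q p"
  and join_assoc: "p \<in> I \<Longrightarrow> q \<in> I \<Longrightarrow> r \<in> I \<Longrightarrow> jn p (jn q r) = jn (jn p q) r"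
  using join_semilattice unfolding join_semilattice_def by blast+

lemma jle_refl: "p \<in> I \<Longrightarrow> jle jn p p"
  by (simp add: jle_def join_idem)

lemma jle_antisym: "p \<in> I \<Longrightarrow> q \<in> I \<Longrightarrow> jle jn p q \<Longrightarrow> jle jn q p \<Longrightarrow> p = q"
  by (metis jle_def join_commute)

lemma jle_trans: "p \<in> I \<Longrightarrow> q \<in> I \<Longrightarrow> r \<in> I \<Longrightarrow> jle jn p q \<Longrightarrow> jle jn q r \<Longrightarrow> jle jn p r"
  unfolding jle_def by (metis join_assoc)

lemma jle_join1: "p \<in> I \<Longrightarrow> q \<in> I \<Longrightarrow> jle jn p (jn p q)"
  unfolding jle_def by (simp add: join_assoc join_idem)

lemma jle_join2: "p \<in> I \<Longrightarrow> q \<in> I \<Longrightarrow> jle jn q (jn p q)"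
  using jle_join1 [of q p] by (simp add: join_commute)

lemma join_jle_iff: "p \<in> I \<Longrightarrow> q \<in> I \<Longrightarrow> r \<in> I \<Longrightarrow> jle jn (jn p q) r \<longleftrightarrow> jle jn p r \<and> jle jn q r"
  by (metis jle_def jle_join1 jle_join2 jle_trans join_assoc join_closed)

lemma join_absorb: "p \<in> I \<Longrightarrow> q \<in> I \<Longrightarrow> jle jn p q \<Longrightarrow> jn q p = q"
  by (simp add: jle_def join_commute)

end

locale glued_system =
  fixes I :: "'i set" and jn :: "'i \<Rightarrow> 'i \<Rightarrow> 'i"
    and Ap :: "'i \<Rightarrow> 'b set" and leP :: "'i \<Rightarrow> 'b \<Rightarrow> 'b \<Rightarrow> bool"
    and psi phi :: "'i \<Rightarrow> 'i \<Rightarrow> 'b \<Rightarrow> 'b"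
    and A :: "'b set" and le :: "'b \<Rightarrow> 'b \<Rightarrow> bool" and ot od :: "'b \<Rightarrow> 'b \<Rightarrow> 'b"
  assumes dir_system: "dir_system I jn Ap leP psi phi"
    and S1: "cond_S1 I jn Ap leP psi phi"
    and S2: "cond_S2 I jn Ap leP psi phi"
    and carrier: "A = (\<Union>p\<in>I. Ap p)"
    and glue: "\<forall>p\<in>I. \<forall>q\<in>I. \<forall>a\<in>Ap p. \<forall>b\<in>Ap q.
         (le a b \<longleftrightarrow> leP (jn p q) (phi p (jn p q) a) (psi q (jn p q) b)) \<and>
         ot a b = psi p (jn p q) a \<and> od a b = phi p (jn p q) a"
begin

sublocale join_semilattice_on I jn
  using dir_system by unfold_locales (simp add: dir_system_def)

lemma blocks_poset: "p \<in> I \<Longrightarrow> poset_on (Ap p) (leP p)"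
  using dir_system by (simp add: dir_system_def)

lemma leP_refl: "p \<in> I \<Longrightarrow> a \<in> Ap p \<Longrightarrow> leP p a a"
  and leP_antisym: "p \<in> I \<Longrightarrow> a \<in> Ap p \<Longrightarrow> b \<in> Ap p \<Longrightarrow> leP p a b \<Longrightarrow> leP p b a \<Longrightarrow> a = b"
  and leP_trans: "p \<in> I \<Longrightarrow> a \<in> Ap p \<Longrightarrow> b \<in> Ap p \<Longrightarrow> c \<in> Ap p \<Longrightarrow> leP p a b \<Longrightarrow> leP p b c
    \<Longrightarrow> leP p a c"
  using blocks_poset unfolding poset_on_def by blast+

lemma block_unique: "p \<in> I \<Longrightarrow> q \<in> I \<Longrightarrow> a \<in> Ap p \<Longrightarrow> a \<in> Ap q \<Longrightarrow> p = q"
  using dir_system unfolding dir_system_def by blast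

context
  fixes p q assumes pq: "p \<in> I" "q \<in> I" "jle jn p q"
begin

lemma psi_closed: "a \<in> Ap p \<Longrightarrow> psi p q a \<in> Ap q"
  and phi_closed: "a \<in> Ap p \<Longrightarrow> phi p q a \<in> Ap q"
  and psi_mono: "a \<in> Ap p \<Longrightarrow> b \<in> Ap p \<Longrightarrow> leP p a b \<Longrightarrow> leP q (psi p q a) (psi p q b)"
  and phi_mono: "a \<in> Ap p \<Longrightarrow> b \<in> Ap p \<Longrightarrow> leP p a b \<Longrightarrow> leP q (phi p q a) (phi p q b)"
  using dir_system pq by (simp_all add: dir_system_def)

lemma psi_comp: "r \<in> I \<Longrightarrow> jle jn q r \<Longrightarrow> a \<in> Ap p \<Longrightarrow> psi q r (psi p q a) = psi p r a"
  and phi_comp: "r \<in> I \<Longrightarrow> jle jn q r \<Longrightarrow> a \<in> Ap p \<Longrightarrow> phi q r (phi p q a) = phi p r a"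
  using dir_system pq by (simp_all add: dir_system_def)

end

lemma psi_id: "p \<in> I \<Longrightarrow> a \<in> Ap p \<Longrightarrow> psi p p a = a"
  and phi_id: "p \<in> I \<Longrightarrow> a \<in> Ap p \<Longrightarrow> phi p p a = a"
  using dir_system by (simp_all add: dir_system_def)

context
  fixes p q a b assumes ab: "p \<in> I" "q \<in> I" "a \<in> Ap p" "b \<in> Ap q"
begin

lemma le_glued: "le a b \<longleftrightarrow> leP (jn p q) (phi p (jn p q) a) (psi q (jn p q) b)"
  and ot_glued: "ot a b = psi p (jn p q) a"
  and od_glued: "od a b = phi p (jn p q) a"
  using glue ab by blast+

end

lemma in_carrier: "p \<in> I \<Longrightarrow> a \<in> Ap p \<Longrightarrow> a \<in> A"
  using carrier by blast

lemma carrier_cases: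
  assumes "a \<in> A"
  obtains p where "p \<in> I" "a \<in> Ap p"
  using assms carrier by blast

lemma S1_nonstrict:
  assumes I: "q \<in> I" "s \<in> I" "t \<in> I" and "jle jn q s" "jle jn q t" and b: "b \<in> Ap q"
  shows "leP (jn s t) (phi s (jn s t) (psi q s b)) (psi t (jn s t) (phi q t b))"
proof (cases "q = s \<or> q = t")
  case True
  then show ?thesis
  proof
    assume "q = s"
    then have "jn s t = t" using assms by (simp add: jle_def)
    with \<open>q = s\<close> show ?thesis
      using assms phi_closed psi_id phi_id leP_refl by simp
  next
    assume "q = t"
    then have "jn s t = s" using assms by (simp add: join_absorb)
    with \<open>q = t\<close> show ?thesis
      using assms psi_closed psi_id phi_id leP_refl by simp
  qed
next
  case False
  then show ?thesis
    using S1 assms unfolding cond_S1_def jlt_def by blast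
qed

lemma psi_le_phi:
  assumes "p \<in> I" "t \<in> I" "jle jn p t" "a \<in> Ap p"
  shows "leP t (psi p t a) (phi p t a)"
  using S1_nonstrict [of p t t a] assms psi_closed phi_closed psi_id phi_id by (simp add: join_idem)

lemma le_of_leP_above:
  assumes I: "p \<in> I" "q \<in> I" "t \<in> I" and ab: "a \<in> Ap p" "b \<in> Ap q"
    and "jle jn (jn p q) t" and le_t: "leP t (phi p t a) (psi q t b)"
  shows "le a b"
proof -
  define s where "s = jn p q"
  have s: "s \<in> I" "jle jn p s" "jle jn q s" "jle jn s t"
    using assms jle_join1 jle_join2 join_closed by (auto simp: s_def)
  have x: "phi p s a \<in> Ap s" "psi q s b \<in> Ap s"
    using I s ab phi_closed psi_closed by simp_all
  have le_t': "leP t (phi s t (phi p s a)) (psi s t (psi q s b))"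
    using le_t I s ab by (simp add: phi_comp psi_comp)
  have "leP s (phi p s a) (psi q s b)"
  proof (cases "s = t")
    case True
    then show ?thesis using le_t' s x by (simp add: phi_id psi_id)
  next
    case False
    then show ?thesis using S2 le_t' I s x unfolding cond_S2_def jlt_def by blast
  qed
  then show ?thesis
    using I ab le_glued by (simp add: s_def)
qed

lemma le_iff_leP: "p \<in> I \<Longrightarrow> a \<in> Ap p \<Longrightarrow> b \<in> Ap p \<Longrightarrow> le a b \<longleftrightarrow> leP p a b"
  using le_glued [of p p a b] by (simp add: join_idem phi_id psi_id)

lemma le_trans:
  assumes I: "p \<in> I" "q \<in> I" "r \<in> I" and abc: "a \<in> Ap p" "b \<in> Ap q" "c \<in> Ap r"
    and "le a b" "le b c"
  shows "le a c"
proof -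
  define s1 s2 where "s1 = jn p q" and "s2 = jn q r"
  define u where "u = jn s1 s2"
  have J: "s1 \<in> I" "s2 \<in> I" "u \<in> I"
    and j: "jle jn p s1" "jle jn q s1" "jle jn q s2" "jle jn r s2" "jle jn s1 u" "jle jn s2 u"
    using I jle_join1 jle_join2 join_closed by (simp_all add: s1_def s2_def u_def)
  have ab: "leP s1 (phi p s1 a) (psi q s1 b)" and bc: "leP s2 (phi q s2 b) (psi r s2 c)"
    using assms le_glued by (simp_all add: s1_def s2_def)
  have x: "phi p s1 a \<in> Ap s1" "psi q s1 b \<in> Ap s1" "phi q s2 b \<in> Ap s2" "psi r s2 c \<in> Ap s2"
    using I J j abc phi_closed psi_closed by simp_all
  have "leP u (phi s1 u (phi p s1 a)) (phi s1 u (psi q s1 b))"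
    using J j x ab by (simp add: phi_mono)
  moreover have "leP u (phi s1 u (psi q s1 b)) (psi s2 u (phi q s2 b))"
    using S1_nonstrict [of q s1 s2 b] I J j abc by (simp add: u_def)
  moreover have "leP u (psi s2 u (phi q s2 b)) (psi s2 u (psi r s2 c))"
    using J j x bc by (simp add: psi_mono)
  ultimately have "leP u (phi s1 u (phi p s1 a)) (psi s2 u (psi r s2 c))"
    using J j x phi_closed psi_closed leP_trans by meson
  then have "leP u (phi p u a) (psi r u c)"
    using I J j abc by (simp add: phi_comp psi_comp)
  moreover have "jle jn (jn p r) u"
    using I J j jle_trans join_jle_iff by meson
  ultimately show ?thesis
    using I J abc le_of_leP_above by blast
qed

lemma le_antisym:
  assumes I: "p \<in> I" "q \<in> I" and ab: "a \<in> Ap p" "b \<in> Ap q" and "le a b" "le b a"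
  shows "a = b"
proof -
  define s where "s = jn p q"
  have s: "s \<in> I" "jle jn p s" "jle jn q s"
    using I jle_join1 jle_join2 join_closed by (simp_all add: s_def)
  have x: "phi p s a \<in> Ap s" "psi p s a \<in> Ap s" "phi q s b \<in> Ap s" "psi q s b \<in> Ap s"
    using I s ab phi_closed psi_closed by simp_all
  have ab_s: "leP s (phi p s a) (psi q s b)" and ba_s: "leP s (phi q s b) (psi p s a)"
    using assms le_glued join_commute by (simp_all add: s_def)
  have "leP s (psi q s b) (phi q s b)" "leP s (psi p s a) (phi p s a)"
    using I s ab psi_le_phi by simp_all
  then have aa: "leP s (phi p s a) (psi p s a)" and bb: "leP s (phi q s b) (psi q s b)"
    using s x ab_s ba_s leP_trans by meson+
  \<comment> \<open>If p were strictly below s, (S2) applied to aa would give a < a; likewise for q and b.\<close>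
  have "p = s" "q = s"
    using S2 I s ab aa bb unfolding cond_S2_def jlt_def by blast+
  then show ?thesis
    using I ab ab_s ba_s leP_antisym by (simp add: phi_id psi_id)
qed

lemma poset: "poset_on A le"
  unfolding poset_on_def
proof (intro conjI ballI impI)
  fix a assume "a \<in> A"
  then show "le a a"
    by (rule carrier_cases) (simp add: le_iff_leP leP_refl)
next
  fix a b assume "a \<in> A" "b \<in> A" "le a b \<and> le b a"
  then show "a = b"
    by (elim carrier_cases) (use le_antisym in blast)
next
  fix a b c assume "a \<in> A" "b \<in> A" "c \<in> A" "le a b \<and> le b c"
  then show "le a c"
    by (elim carrier_cases) (use le_trans in blast)
qed

context
  fixes g :: "'i \<Rightarrow> 'i \<Rightarrow> 'b \<Rightarrow> 'b" and h :: "'b \<Rightarrow> 'b \<Rightarrow> 'b"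
  assumes g_closed: "\<And>p q a. p \<in> I \<Longrightarrow> q \<in> I \<Longrightarrow> jle jn p q \<Longrightarrow> a \<in> Ap p \<Longrightarrow> g p q a \<in> Ap q"
    and g_id: "\<And>p a. p \<in> I \<Longrightarrow> a \<in> Ap p \<Longrightarrow> g p p a = a"
    and g_comp: "\<And>p q r a. p \<in> I \<Longrightarrow> q \<in> I \<Longrightarrow> r \<in> I \<Longrightarrow> jle jn p q \<Longrightarrow> jle jn q r \<Longrightarrow>
      a \<in> Ap p \<Longrightarrow> g q r (g p q a) = g p r a"
    and h_glued: "\<And>p q a b. p \<in> I \<Longrightarrow> q \<in> I \<Longrightarrow> a \<in> Ap p \<Longrightarrow> b \<in> Ap q \<Longrightarrow>
      h a b = g p (jn p q) a"
begin

lemma h_in_join_block: "p \<in> I \<Longrightarrow> q \<in> I \<Longrightarrow> a \<in> Ap p \<Longrightarrow> b \<in> Ap q \<Longrightarrow> h a b \<in> Ap (jn p q)"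
  by (simp add: h_glued g_closed jle_join1 join_closed)

lemma lnband_glued: "lnband A h"
  unfolding lnband_def
proof (intro conjI ballI)
  fix a b assume "a \<in> A" "b \<in> A"
  then show "h a b \<in> A"
    by (elim carrier_cases) (use h_in_join_block join_closed in_carrier in blast)
next
  fix a assume "a \<in> A"
  then show "h a a = a"
    by (rule carrier_cases) (simp add: h_glued join_idem g_id)
next
  fix a b c assume "a \<in> A" "b \<in> A" "c \<in> A"
  then obtain p q r where I: "p \<in> I" "q \<in> I" "r \<in> I" and abc: "a \<in> Ap p" "b \<in> Ap q" "c \<in> Ap r"
    by (metis carrier_cases)
  have h_abc: "h a (h b c) = g p (jn p (jn q r)) a"
    using h_glued [OF I(1) join_closed [OF I(2,3)] abc(1) h_in_join_block [OF I(2,3) abc(2,3)]] .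
  have h_acb: "h a (h c b) = g p (jn p (jn r q)) a"
    using h_glued [OF I(1) join_closed [OF I(3,2)] abc(1) h_in_join_block [OF I(3,2) abc(3,2)]] .
  have "h (h a b) c = g (jn p q) (jn (jn p q) r) (h a b)"
    using h_glued [OF join_closed [OF I(1,2)] I(3) h_in_join_block [OF I(1,2) abc(1,2)] abc(3)] .
  also have "\<dots> = g (jn p q) (jn (jn p q) r) (g p (jn p q) a)"
    using I abc by (simp add: h_glued)
  also have "\<dots> = g p (jn (jn p q) r) a"
    using I abc by (simp add: g_comp jle_join1 join_closed)
  finally show "h a (h b c) = h (h a b) c"
    using I h_abc by (simp add: join_assoc)
  show "h a (h b c) = h a (h c b)"
    using I h_abc h_acb by (simp add: join_commute)
qed

lemma bpre_glued_iff:
  assumes I: "p \<in> I" "q \<in> I" and ab: "a \<in> Ap p" "b \<in> Ap q"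
  shows "bpre h a b \<longleftrightarrow> jle jn p q"
proof
  assume "jle jn p q"
  then show "bpre h a b"
    using assms by (simp add: bpre_def h_glued join_absorb g_id)
next
  assume "bpre h a b"
  then have "b \<in> Ap (jn q p)"
    using h_in_join_block [of q p b a] assms by (simp add: bpre_def)
  then have "jn q p = q"
    using I ab join_closed block_unique by blast
  then show "jle jn p q"
    using I by (simp add: jle_def join_commute)
qed

end

lemma ot_mono:
  assumes I: "p \<in> I" "q \<in> I" "r \<in> I" and abc: "a \<in> Ap p" "b \<in> Ap q" "c \<in> Ap r"
    and "le a b"
  shows "le (ot a c) (ot b c)"
proof -
  define s pr qr where "s = jn p q" and "pr = jn p r" and "qr = jn q r"
  define w where "w = jn pr s"
  have J: "s \<in> I" "pr \<in> I" "qr \<in> I" "w \<in> I"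
    using I join_closed by (simp_all add: s_def pr_def qr_def w_def)
  have j: "jle jn p s" "jle jn q s" "jle jn p pr" "jle jn r pr" "jle jn q qr" "jle jn r qr"
      "jle jn pr w" "jle jn s w"
    using I J jle_join1 jle_join2 by (simp_all add: s_def pr_def qr_def w_def)
  have "jle jn q w" "jle jn r w"
    using I J j jle_trans by meson+
  then have "jle jn qr w" "jle jn (jn pr qr) w"
    using I J j join_jle_iff by (simp_all add: qr_def)
  have x: "phi p s a \<in> Ap s" "psi q s b \<in> Ap s" "psi p pr a \<in> Ap pr" "psi q qr b \<in> Ap qr"
    using I J j abc phi_closed psi_closed by simp_all
  have ab: "leP s (phi p s a) (psi q s b)"
    using assms le_glued by (simp add: s_def)
  have "leP w (phi pr w (psi p pr a)) (psi s w (phi p s a))"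
    using S1_nonstrict [of p pr s a] I J j abc by (simp add: w_def)
  moreover have "leP w (psi s w (phi p s a)) (psi s w (psi q s b))"
    using J j x ab by (simp add: psi_mono)
  ultimately have "leP w (phi pr w (psi p pr a)) (psi s w (psi q s b))"
    using J j x phi_closed psi_closed leP_trans by meson
  moreover have "psi s w (psi q s b) = psi qr w (psi q qr b)"
    using I J j abc \<open>jle jn qr w\<close> by (simp add: psi_comp)
  ultimately have "le (psi p pr a) (psi q qr b)"
    using J x \<open>jle jn (jn pr qr) w\<close> by (simp add: le_of_leP_above)
  then show ?thesis
    using I abc by (simp add: ot_glued pr_def qr_def)
qed

lemma od_mono:
  assumes I: "p \<in> I" "q \<in> I" "r \<in> I" and abc: "a \<in> Ap p" "b \<in> Ap q" "c \<in> Ap r"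
    and "le a b"
  shows "le (od a c) (od b c)"
proof -
  define s pr qr where "s = jn p q" and "pr = jn p r" and "qr = jn q r"
  define w where "w = jn s qr"
  have J: "s \<in> I" "pr \<in> I" "qr \<in> I" "w \<in> I"
    using I join_closed by (simp_all add: s_def pr_def qr_def w_def)
  have j: "jle jn p s" "jle jn q s" "jle jn p pr" "jle jn r pr" "jle jn q qr" "jle jn r qr"
      "jle jn s w" "jle jn qr w"
    using I J jle_join1 jle_join2 by (simp_all add: s_def pr_def qr_def w_def)
  have "jle jn p w" "jle jn r w"
    using I J j jle_trans by meson+
  then have "jle jn pr w" "jle jn (jn pr qr) w"
    using I J j join_jle_iff by (simp_all add: pr_def)
  have x: "phi p s a \<in> Ap s" "psi q s b \<in> Ap s" "phi p pr a \<in> Ap pr" "phi q qr b \<in> Ap qr"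
    using I J j abc phi_closed psi_closed by simp_all
  have ab: "leP s (phi p s a) (psi q s b)"
    using assms le_glued by (simp add: s_def)
  have "leP w (phi s w (phi p s a)) (phi s w (psi q s b))"
    using J j x ab by (simp add: phi_mono)
  moreover have "leP w (phi s w (psi q s b)) (psi qr w (phi q qr b))"
    using S1_nonstrict [of q s qr b] I J j abc by (simp add: w_def)
  ultimately have "leP w (phi s w (phi p s a)) (psi qr w (phi q qr b))"
    using J j x phi_closed psi_closed leP_trans by meson
  moreover have "phi s w (phi p s a) = phi pr w (phi p pr a)"
    using I J j abc \<open>jle jn pr w\<close> by (simp add: phi_comp)
  ultimately have "le (phi p pr a) (phi q qr b)"
    using J x \<open>jle jn (jn pr qr) w\<close> by (simp add: le_of_leP_above)
  then show ?thesis
    using I abc by (simp add: od_glued pr_def qr_def)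
qed

lemma le_of_od_le_ot:
  assumes I: "p \<in> I" "q \<in> I" and ab: "a \<in> Ap p" "b \<in> Ap q" and "le (od a b) (ot b a)"
  shows "le a b"
proof -
  define s where "s = jn p q"
  have s: "s \<in> I" "jle jn p s" "jle jn q s"
    using I jle_join1 jle_join2 join_closed by (simp_all add: s_def)
  have "od a b = phi p s a" "ot b a = psi q s b"
    using I ab by (simp_all add: od_glued ot_glued join_commute s_def)
  then have "leP s (phi p s a) (psi q s b)"
    using assms s phi_closed psi_closed le_iff_leP by simp
  then show ?thesis
    using I ab le_glued by (simp add: s_def)
qed

lemma lnband_ot: "lnband A ot"
  by (rule lnband_glued [of psi]) (simp_all add: psi_closed psi_id psi_comp ot_glued)

lemma lnband_od: "lnband A od"
  by (rule lnband_glued [of phi]) (simp_all add: phi_closed phi_id phi_comp od_glued)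

lemma bpre_ot_iff_jle:
  "p \<in> I \<Longrightarrow> q \<in> I \<Longrightarrow> a \<in> Ap p \<Longrightarrow> b \<in> Ap q \<Longrightarrow> bpre ot a b \<longleftrightarrow> jle jn p q"
  by (rule bpre_glued_iff [of psi]) (simp_all add: psi_closed psi_id psi_comp ot_glued)

lemma bpre_od_iff_jle:
  "p \<in> I \<Longrightarrow> q \<in> I \<Longrightarrow> a \<in> Ap p \<Longrightarrow> b \<in> Ap q \<Longrightarrow> bpre od a b \<longleftrightarrow> jle jn p q"
  by (rule bpre_glued_iff [of phi]) (simp_all add: phi_closed phi_id phi_comp od_glued)

lemma partition_pair: "partition_pair A le ot od"
  unfolding partition_pair_def homotactic_def
proof (intro conjI ballI impI lnband_ot lnband_od)
  fix a b assume "a \<in> A" "b \<in> A"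
  then show "bpre ot a b \<longleftrightarrow> bpre od a b"
    by (elim carrier_cases) (simp add: bpre_ot_iff_jle bpre_od_iff_jle)
next
  fix a b c assume "a \<in> A" "b \<in> A" "c \<in> A" "le a b"
  then show "le (ot a c) (ot b c)" "le (od a c) (od b c)"
    by (elim carrier_cases; use ot_mono od_mono in blast)+
next
  fix a b assume "a \<in> A" "b \<in> A" "le (od a b) (ot b a)"
  then show "le a b"
    by (elim carrier_cases) (use le_of_od_le_ot in blast)
qed

lemma gluing:
  "poset_on A le \<and> partition_pair A le ot od \<and>
   (\<forall>p\<in>I. \<forall>q\<in>I. \<forall>a\<in>Ap p. \<forall>b\<in>Ap q.
      (bequiv od a b \<longleftrightarrow> p = q) \<and> (bpre od a b \<longleftrightarrow> jle jn p q)) \<and>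
   (\<forall>rep. (\<forall>p\<in>I. rep p \<in> Ap p) \<longrightarrow>
      (\<forall>p\<in>I. \<forall>q\<in>I. jle jn p q \<longrightarrow>
         (\<forall>a\<in>Ap p. ot a (rep q) = psi p q a \<and> od a (rep q) = phi p q a)))"
proof (intro conjI ballI allI impI poset partition_pair)
  fix p q a b assume "p \<in> I" "q \<in> I" "a \<in> Ap p" "b \<in> Ap q"
  then show "bpre od a b \<longleftrightarrow> jle jn p q" "bequiv od a b \<longleftrightarrow> p = q"
    using jle_antisym jle_refl by (auto simp: bequiv_def bpre_od_iff_jle)
next
  fix rep p q a assume "\<forall>p\<in>I. rep p \<in> Ap p" "p \<in> I" "q \<in> I" "jle jn p q" "a \<in> Ap p"
  then show "ot a (rep q) = psi p q a" "od a (rep q) = phi p q a"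
    by (simp_all add: ot_glued od_glued jle_def)
qed

end

theorem theorem5p2:
  shows
  "(\<forall>(A :: 'a set) le ot od (I :: 'a set) jn.
      poset_on A le \<and> partition_pair A le ot od \<and>
      I \<subseteq> A \<and> (\<forall>a\<in>A. \<exists>!p. p \<in> I \<and> bequiv od a p) \<and>
      (\<forall>p\<in>I. \<forall>q\<in>I. jn p q \<in> I \<and> bequiv od (od p q) (jn p q))
    \<longrightarrow>
      (\<forall>p\<in>I. \<forall>q\<in>I. jle jn p q \<longleftrightarrow> bpre od p q) \<and>
      dir_system I jn (\<lambda>p. {a\<in>A. bequiv od a p}) (\<lambda>p. le) (\<lambda>p q a. ot a q) (\<lambda>p q a. od a q) \<and>
      cond_S1 I jn (\<lambda>p. {a\<in>A. bequiv od a p}) (\<lambda>p. le) (\<lambda>p q a. ot a q) (\<lambda>p q a. od a q) \<and>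
      cond_S2 I jn (\<lambda>p. {a\<in>A. bequiv od a p}) (\<lambda>p. le) (\<lambda>p q a. ot a q) (\<lambda>p q a. od a q) \<and>
      (\<forall>p\<in>I. \<forall>q\<in>I. \<forall>a. \<forall>b. a \<in> A \<and> bequiv od a p \<and> b \<in> A \<and> bequiv od b q \<longrightarrow>
         (le a b \<longleftrightarrow> le (od a (jn p q)) (ot b (jn p q)))))
  \<and>
   (\<forall>(I :: 'i set) jn (Ap :: 'i \<Rightarrow> 'b set) leP psi phi A le ot od.
      dir_system I jn Ap leP psi phi \<and>
      cond_S1 I jn Ap leP psi phi \<and> cond_S2 I jn Ap leP psi phi \<and>
      A = (\<Union>p\<in>I. Ap p) \<and>
      (\<forall>p\<in>I. \<forall>q\<in>I. \<forall>a\<in>Ap p. \<forall>b\<in>Ap q.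
         (le a b \<longleftrightarrow> leP (jn p q) (phi p (jn p q) a) (psi q (jn p q) b)) \<and>
         ot a b = psi p (jn p q) a \<and> od a b = phi p (jn p q) a)
    \<longrightarrow>
      poset_on A le \<and> partition_pair A le ot od \<and>
      (\<forall>p\<in>I. \<forall>q\<in>I. \<forall>a\<in>Ap p. \<forall>b\<in>Ap q.
         (bequiv od a b \<longleftrightarrow> p = q) \<and> (bpre od a b \<longleftrightarrow> jle jn p q)) \<and>
      (\<forall>rep. (\<forall>p\<in>I. rep p \<in> Ap p) \<longrightarrow>
         (\<forall>p\<in>I. \<forall>q\<in>I. jle jn p q \<longrightarrow>
            (\<forall>a\<in>Ap p. ot a (rep q) = psi p q a \<and> od a (rep q) = phi p q a))))"
  apply (rule conjI; intro allI impI)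
   apply (rule partition_pair_classes.decomposition)
   apply (simp add: partition_pair_classes_def partition_pair_classes_axioms_def
      partition_pair_poset_def)
  subgoal for I jn Ap leP psi phi
    by (rule glued_system.gluing [of I jn Ap leP psi phi]) (simp add: glued_system_def)
  done

end
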